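(* Fix $m\in\mathbb N$, $\lambda>\lambda_0^m$, and let $\psi_0=u_0(s)e^{im\varphi}$ be the vortex equilibrium of the context. Suppose $\mu_0^*>0$ (i.e. $\psi_0$ is unstable for $\partial_t\Psi=\Delta_{\mathcal M}\Psi+\lambda(1-|\Psi|^2)\Psi$). Then for all $b\in\mathbb R$ and all $\tau\ge0$, the linearization at $\psi_0$ of the control system with pure time delay $$\partial_t\Psi=\Delta_{\mathcal M}\Psi+\lambda(1-|\Psi|^2)\Psi+b\big(\Psi-\Psi(t-\tau,s,\varphi)\big)$$ has a real eigenvalue $\tilde\mu>0$; in particular $\psi_0$ remains unstable for this control system.
   Context: Setting. Let $\mathcal M=\{(a(s)\cos\varphi,\,a(s)\sin\varphi,\,\tilde a(s)) : s\in[0,s_*],\ \varphi\in S^1=\mathbb{R}/2\pi\mathbb{Z}\}$ be a compact surface of revolution with $a,\tilde a\in C^{2,\upsilon}$ for some $\upsilon\in(0,1)$, $a(0)=0$, $a(s)>0$ for $s\in(0,s_* )$, $\tilde a'(0)=0$, and $(a')^2+(\tilde a')^2\equiv1$. The boundary $\partial\mathcal M$ is empty iff $a(s_* )=0$ ("spherical geometry"), otherwise nonempty ("circular geometry"). In spherical geometry one assumes in addition $a(s)=a(s_*-s)$ for all $s\in[0,s_*]$. $\Delta_{\mathcal M}$ denotes the Laplace–Beltrami operator on $L^2(\mathcal M,\mathbb C)$ with domain $H^2(\mathcal M,\mathbb C)$, subject, if $\partial\mathcal M\neq\emptyset$, to the Robin condition $\alpha_1\Psi+\alpha_2\nabla\Psi\cdot\mathbf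 n=0$ on $\partial\mathcal M$, where $\mathbf n$ is the outer unit normal and $\alpha_1,\alpha_2\in\mathbb R$ are not both zero with $\alpha_1\alpha_2\ge0$. $\mathbb C$ is identified with $\mathbb R^2$, so linearizations are $\mathbb R$-linear. For $n\in\mathbb Z$ let $L^2_n(\mathbb C)=\{\psi\in L^2(\mathcal M,\mathbb C):\psi(s,\varphi)=u(s)e^{in\varphi}\}$. The eigenvalues of $-\Delta_m$ on $L^2_m(\mathbb C)$ are simple and are denoted $0<\lambda_0^m<\lambda_1^m<\cdots\to\infty$. Vortex equilibria. For $\lambda>\lambda_j^m$ there is a nontrivial solution $\psi_j(s,\varphi)=u_j(s)e^{im\varphi}\in L^2_m(\mathbb C)$ of $0=\Delta_m\psi+\lambda(1-|\psi|^2)\psi$ with $u_j$ real valued and having exactly $j$ simple zeros in $(0,s_* )$; in spherical geometry $u_j(s)=(-1)^ju_j(s_*-s)$. $\mathcal L_jV=\Delta_{\mathcal M}V+\lambda((1-2u_j^2)V-u_j^2e^{2im\varphi}\overline V)$ is the (self-adjoint, compact-resolvent) linearization at $\psi_j$ of $\partial_t\Psi=\Delta_{\mathcal M}\Psi+\lambda(1-|\Psi|^2)\Psi$, and $\mu_j^*$ is its largest eigenvalue. Eigenvalues of a linear delay equation $\partial_tV=\mathcal AV+\mathcal BV(t-\tau)$ are the $z\in\mathbb C$ for which $V=e^{zt}V_0$ with $V_0\neq0$ is a solution. *)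

theory Defs
  imports "HOL-Analysis.Analysis"
begin

type_synonym fn = "real \<Rightarrow> real \<Rightarrow> complex"  \<comment> \<open>functions of (s, phi)\<close>

text \<open>Profile curve of a compact surface of revolution with C^{2,upsilon} data.
  a1, a2 are the first and second derivatives of a; c1, c2 those of c (= a tilde).\<close>
definition rev_profile ::
  "real \<Rightarrow> real \<Rightarrow> (real \<Rightarrow> real) \<Rightarrow> (real \<Rightarrow> real) \<Rightarrow> (real \<Rightarrow> real)
   \<Rightarrow> (real \<Rightarrow> real) \<Rightarrow> (real \<Rightarrow> real) \<Rightarrow> (real \<Rightarrow> real) \<Rightarrow> bool" where
  "rev_profile ups sst a a1 a2 c c1 c2 \<longleftrightarrow>
     0 < ups \<and> ups < 1 \<and> 0 < sst \<and>
     (\<forall>x\<in>{0..sst}. (a has_real_derivative a1 x) (at x within {0..sst}) \<and>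
                    (a1 has_real_derivative a2 x) (at x within {0..sst}) \<and>
                    (c has_real_derivative c1 x) (at x within {0..sst}) \<and>
                    (c1 has_real_derivative c2 x) (at x within {0..sst})) \<and>
     (\<exists>C. \<forall>x\<in>{0..sst}. \<forall>y\<in>{0..sst}.
          \<bar>a2 x - a2 y\<bar> \<le> C * \<bar>x - y\<bar> powr ups \<and> \<bar>c2 x - c2 y\<bar> \<le> C * \<bar>x - y\<bar> powr ups) \<and>
     a 0 = 0 \<and> (\<forall>s\<in>{0<..<sst}. a s > 0) \<and> c1 0 = 0 \<and>
     (\<forall>s\<in>{0..sst}. (a1 s)\<^sup>2 + (c1 s)\<^sup>2 = 1) \<and>
     \<comment> \<open>spherical geometry (empty boundary): symmetry assumption\<close>
     (a sst = 0 \<longrightarrow> (\<forall>s\<in>{0..sst}. a s = a (sst - s)))"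

definition param :: "(real \<Rightarrow> real) \<Rightarrow> (real \<Rightarrow> real) \<Rightarrow> real \<Rightarrow> real \<Rightarrow> real \<times> real \<times> real" where
  "param a c s \<phi> = (a s * cos \<phi>, a s * sin \<phi>, c s)"

text \<open>Domain of the Laplace-Beltrami operator (classical version): V is the pull-back of a
  function on the surface M which extends to a C^2 function F on an open neighbourhood of M
  in R^3; if the boundary is nonempty (a sst \<noteq> 0), the Robin condition
  alpha1 V + alpha2 (grad V . n) = 0 holds, the outer unit normal n c s = sst being d/ds of the
  parametrisation.\<close>
definition in_dom ::
  "real \<Rightarrow> (real \<Rightarrow> real) \<Rightarrow> (real \<Rightarrow> real) \<Rightarrow> (real \<Rightarrow> real) \<Rightarrow> (real \<Rightarrow> real)
   \<Rightarrow> real \<Rightarrow> real \<Rightarrow> fn \<Rightarrow> bool" where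
  "in_dom sst a a1 c c1 al1 al2 V \<longleftrightarrow>
    (\<exists>U F F' F''. open U \<and> (\<forall>s\<in>{0..sst}. \<forall>\<phi>. param a c s \<phi> \<in> U) \<and>
       (\<forall>x\<in>U. (F has_derivative blinfun_apply (F' x)) (at x)) \<and>
       (\<forall>x\<in>U. (F' has_derivative blinfun_apply (F'' x)) (at x)) \<and>
       continuous_on U F'' \<and>
       (\<forall>s\<in>{0..sst}. \<forall>\<phi>. V s \<phi> = (F :: real \<times> real \<times> real \<Rightarrow> complex) (param a c s \<phi>)) \<and>
       (a sst \<noteq> 0 \<longrightarrow> (\<forall>\<phi>. complex_of_real al1 * V sst \<phi> +
            complex_of_real al2 * blinfun_apply (F' (param a c sst \<phi>))
               (a1 sst * cos \<phi>, a1 sst * sin \<phi>, c1 sst) = 0)))"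

definition d_s :: "fn \<Rightarrow> fn" where
  "d_s V s \<phi> = vector_derivative (\<lambda>r. V r \<phi>) (at s)"

definition d_phi :: "fn \<Rightarrow> fn" where
  "d_phi V s \<phi> = vector_derivative (\<lambda>p. V s p) (at \<phi>)"

text \<open>Laplace-Beltrami operator of the metric ds^2 + a(s)^2 dphi^2, for 0 < s < sst.\<close>
definition LB :: "(real \<Rightarrow> real) \<Rightarrow> (real \<Rightarrow> real) \<Rightarrow> fn \<Rightarrow> fn" where
  "LB a a1 V s \<phi> = d_s (d_s V) s \<phi> + complex_of_real (a1 s / a s) * d_s V s \<phi>
                    + d_phi (d_phi V) s \<phi> / complex_of_real ((a s)\<^sup>2)"

text \<open>Linearization L_j c psi_j = u(s) e^{i m phi}.\<close>
definition Lin :: "(real \<Rightarrow> real) \<Rightarrow> (real \<Rightarrow> real) \<Rightarrow> real \<Rightarrow> nat \<Rightarrow> (real \<Rightarrow> real) \<Rightarrow> fn \<Rightarrow> fn" where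
  "Lin a a1 lam m u V s \<phi> = LB a a1 V s \<phi> + complex_of_real lam *
     ((1 - 2 * complex_of_real ((u s)\<^sup>2)) * V s \<phi>
      - complex_of_real ((u s)\<^sup>2) * cis (2 * real m * \<phi>) * cnj (V s \<phi>))"

text \<open>Nonzero element (V is continuous on M, so nonzero in L^2 iff nonzero somewhere).\<close>
definition nonzero_fn :: "real \<Rightarrow> fn \<Rightarrow> bool" where
  "nonzero_fn sst V \<longleftrightarrow> (\<exists>s\<in>{0..sst}. \<exists>\<phi>. V s \<phi> \<noteq> 0)"

definition eig_minus_Delta_m ::
  "real \<Rightarrow> (real \<Rightarrow> real) \<Rightarrow> (real \<Rightarrow> real) \<Rightarrow> (real \<Rightarrow> real) \<Rightarrow> (real \<Rightarrow> real)
   \<Rightarrow> real \<Rightarrow> real \<Rightarrow> nat \<Rightarrow> real \<Rightarrow> bool" where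
  "eig_minus_Delta_m sst a a1 c c1 al1 al2 m \<kappa> \<longleftrightarrow>
    (\<exists>u :: real \<Rightarrow> complex. let \<psi> = (\<lambda>s \<phi>. u s * cis (real m * \<phi>)) in
       in_dom sst a a1 c c1 al1 al2 \<psi> \<and> nonzero_fn sst \<psi> \<and>
       (\<forall>s\<in>{0<..<sst}. \<forall>\<phi>. - LB a a1 \<psi> s \<phi> = complex_of_real \<kappa> * \<psi> s \<phi>))"

definition eig_Lin ::
  "real \<Rightarrow> (real \<Rightarrow> real) \<Rightarrow> (real \<Rightarrow> real) \<Rightarrow> (real \<Rightarrow> real) \<Rightarrow> (real \<Rightarrow> real)
   \<Rightarrow> real \<Rightarrow> real \<Rightarrow> real \<Rightarrow> nat \<Rightarrow> (real \<Rightarrow> real) \<Rightarrow> real \<Rightarrow> bool" where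
  "eig_Lin sst a a1 c c1 al1 al2 lam m u \<mu> \<longleftrightarrow>
    (\<exists>V. in_dom sst a a1 c c1 al1 al2 V \<and> nonzero_fn sst V \<and>
       (\<forall>s\<in>{0<..<sst}. \<forall>\<phi>. Lin a a1 lam m u V s \<phi> = complex_of_real \<mu> * V s \<phi>))"

definition eig_delay ::
  "real \<Rightarrow> (real \<Rightarrow> real) \<Rightarrow> (real \<Rightarrow> real) \<Rightarrow> (real \<Rightarrow> real) \<Rightarrow> (real \<Rightarrow> real)
   \<Rightarrow> real \<Rightarrow> real \<Rightarrow> real \<Rightarrow> nat \<Rightarrow> (real \<Rightarrow> real) \<Rightarrow> real \<Rightarrow> real \<Rightarrow> complex \<Rightarrow> bool" where
  "eig_delay sst a a1 c c1 al1 al2 lam m u b \<tau> z \<longleftrightarrow>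
    (\<exists>V0. in_dom sst a a1 c c1 al1 al2 V0 \<and> nonzero_fn sst V0 \<and>
      (let W = (\<lambda>t s \<phi>. exp (z * complex_of_real t) * V0 s \<phi>) in
        (\<forall>t. in_dom sst a a1 c c1 al1 al2 (W t)) \<and>
        (\<forall>t. \<forall>s\<in>{0<..<sst}. \<forall>\<phi>.
           ((\<lambda>r. W r s \<phi>) has_vector_derivative
              (Lin a a1 lam m u (W t) s \<phi> + complex_of_real b * (W t s \<phi> - W (t - \<tau>) s \<phi>))) (at t))))"

end

theory Submission
  imports Defs
begin

text \<open>Let \<open>V\<close> be an eigenfunction of the linearization \<open>L\<close> at \<open>\<psi>\<^sub>0\<close> for its eigenvalue
  \<open>\<mu>\<^sub>0 > 0\<close>. Since \<open>L\<close> is linear over the reals, \<open>exp (\<mu> t) V\<close> with real \<open>\<mu>\<close> solves the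
  delayed linearization as soon as \<open>\<mu> = \<mu>\<^sub>0 + b (1 - exp (-\<mu> \<tau>))\<close>. The difference of the two
  sides is negative at \<open>\<mu> = 0\<close> and nonnegative at \<open>\<mu> = \<mu>\<^sub>0 + \<bar>b\<bar>\<close>, so the intermediate
  value theorem yields a positive root.\<close>

lemma has_vector_derivative_blinfun_chain:
  assumes "(\<gamma> has_vector_derivative g) (at s)" "(F has_derivative blinfun_apply B) (at (\<gamma> s))"
  shows "((\<lambda>r. F (\<gamma> r)) has_vector_derivative blinfun_apply B g) (at s)"
  using vector_derivative_diff_chain_within[of \<gamma> g s UNIV F "blinfun_apply B"] assms
    has_derivative_at_withinI by (auto simp: o_def)

lemma twice_differentiable_comp_curve:
  fixes \<gamma> :: "real \<Rightarrow> 'a::real_normed_vector" and F :: "'a \<Rightarrow> 'b::real_normed_vector"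
  assumes "open S" "x \<in> S"
    and F': "\<And>y. y \<in> U \<Longrightarrow> (F has_derivative blinfun_apply (F' y)) (at y)"
    and F'': "\<And>y. y \<in> U \<Longrightarrow> (F' has_derivative blinfun_apply (F'' y)) (at y)"
    and \<gamma>U: "\<And>r. r \<in> S \<Longrightarrow> \<gamma> r \<in> U"
    and \<gamma>': "\<And>r. r \<in> S \<Longrightarrow> (\<gamma> has_vector_derivative \<gamma>' r) (at r)"
    and \<gamma>'': "(\<gamma>' has_vector_derivative \<gamma>'') (at x)"
    and f: "\<And>r. r \<in> S \<Longrightarrow> f r = F (\<gamma> r)"
  shows "f differentiable (at x)" "(\<lambda>r. vector_derivative f (at r)) differentiable (at x)"
proof -
  have f': "(f has_vector_derivative F' (\<gamma> r) (\<gamma>' r)) (at r)" if "r \<in> S" for r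
    using has_vector_derivative_blinfun_chain[OF \<gamma>'[OF that] F'[OF \<gamma>U[OF that]]]
    by (rule has_vector_derivative_transform_within_open) (use \<open>open S\<close> that f in auto)
  then show "f differentiable (at x)" using \<open>x \<in> S\<close> differentiableI_vector by blast
  have "((\<lambda>r. F' (\<gamma> r)) has_vector_derivative F'' (\<gamma> x) (\<gamma>' x)) (at x)"
    using \<open>x \<in> S\<close> by (intro has_vector_derivative_blinfun_chain \<gamma>' F'' \<gamma>U)
  from bounded_bilinear.has_vector_derivative[OF bounded_bilinear_blinfun_apply this \<gamma>'']
  have "((\<lambda>r. vector_derivative f (at r)) has_vector_derivative
      F' (\<gamma> x) \<gamma>'' + F'' (\<gamma> x) (\<gamma>' x) (\<gamma>' x)) (at x)"
    by (rule has_vector_derivative_transform_within_open)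
      (use \<open>open S\<close> \<open>x \<in> S\<close> in \<open>auto simp: f'[THEN vector_derivative_at]\<close>)
  then show "(\<lambda>r. vector_derivative f (at r)) differentiable (at x)"
    using differentiableI_vector by blast
qed

lemma has_vector_derivative_triple:
  assumes "(f has_real_derivative A) (at x)" "(g has_real_derivative B) (at x)"
    "(h has_real_derivative C) (at x)"
  shows "((\<lambda>r. (f r, g r, h r)) has_vector_derivative (A, B, C)) (at x)"
  using assms
  by (auto simp: has_real_derivative_iff_has_vector_derivative intro!: has_vector_derivative_Pair)

lemma rev_profile_has_real_derivative:
  assumes "rev_profile ups sst a a1 a2 c c1 c2" "r \<in> {0<..<sst}"
  shows "(a has_real_derivative a1 r) (at r)" "(a1 has_real_derivative a2 r) (at r)"
    "(c has_real_derivative c1 r) (at r)" "(c1 has_real_derivative c2 r) (at r)"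
proof -
  have "at r within {0..sst} = at r"
    using assms(2) by (intro at_within_interior) (simp add: interior_atLeastAtMost_real)
  with assms show "(a has_real_derivative a1 r) (at r)" "(a1 has_real_derivative a2 r) (at r)"
    "(c has_real_derivative c1 r) (at r)" "(c1 has_real_derivative c2 r) (at r)"
    unfolding rev_profile_def by (metis greaterThanLessThan_iff atLeastAtMost_iff less_imp_le)+
qed

lemma in_dom_differentiable:
  assumes surf: "rev_profile ups sst a a1 a2 c c1 c2"
    and dom: "in_dom sst a a1 c c1 al1 al2 V"
  shows "r \<in> {0<..<sst} \<Longrightarrow> (\<lambda>r. V r \<phi>) differentiable (at r)"
    and "r \<in> {0<..<sst} \<Longrightarrow> (\<lambda>r. d_s V r \<phi>) differentiable (at r)"
    and "s \<in> {0..sst} \<Longrightarrow> (\<lambda>p. V s p) differentiable (at p)"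
    and "s \<in> {0..sst} \<Longrightarrow> (\<lambda>p. d_phi V s p) differentiable (at p)"
proof -
  obtain U F F' F'' where U: "\<forall>s\<in>{0..sst}. \<forall>\<phi>. param a c s \<phi> \<in> U"
    and F': "\<And>x. x \<in> U \<Longrightarrow> (F has_derivative blinfun_apply (F' x)) (at x)"
    and F'': "\<And>x. x \<in> U \<Longrightarrow> (F' has_derivative blinfun_apply (F'' x)) (at x)"
    and VF: "\<forall>s\<in>{0..sst}. \<forall>\<phi>. V s \<phi> = F (param a c s \<phi>)"
    using dom unfolding in_dom_def by blast
  note D = rev_profile_has_real_derivative[OF surf]
  have s_curve: "\<And>r. r \<in> {0<..<sst} \<Longrightarrow> ((\<lambda>r. param a c r \<phi>) has_vector_derivative
      (a1 r * cos \<phi>, a1 r * sin \<phi>, c1 r)) (at r)"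
    "\<And>r. r \<in> {0<..<sst} \<Longrightarrow> ((\<lambda>r. (a1 r * cos \<phi>, a1 r * sin \<phi>, c1 r)) has_vector_derivative
      (a2 r * cos \<phi>, a2 r * sin \<phi>, c2 r)) (at r)"
    unfolding param_def by (intro has_vector_derivative_triple DERIV_cmult_right D; assumption)+
  have "(\<lambda>r. V r \<phi>) differentiable (at r)"
    "(\<lambda>r. vector_derivative (\<lambda>r. V r \<phi>) (at r)) differentiable (at r)"
    if r: "r \<in> {0<..<sst}" for r
  proof -
    have "param a c q \<phi> \<in> U" "V q \<phi> = F (param a c q \<phi>)" if "q \<in> {0<..<sst}" for q
      using U VF that by auto
    note comp = this F' F'' s_curve(1) s_curve(2)[OF r]
    note curve = twice_differentiable_comp_curve[where U=U and F=F and F'=F' and F''=F''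
        and \<gamma>="\<lambda>r. param a c r \<phi>" and \<gamma>'="\<lambda>r. (a1 r * cos \<phi>, a1 r * sin \<phi>, c1 r)"
        and \<gamma>''="(a2 r * cos \<phi>, a2 r * sin \<phi>, c2 r)", OF open_greaterThanLessThan r]
    show "(\<lambda>r. V r \<phi>) differentiable (at r)"
      by (rule curve(1)) (assumption | rule comp)+
    show "(\<lambda>r. vector_derivative (\<lambda>r. V r \<phi>) (at r)) differentiable (at r)"
      by (rule curve(2)) (assumption | rule comp)+
  qed
  then show "r \<in> {0<..<sst} \<Longrightarrow> (\<lambda>r. V r \<phi>) differentiable (at r)"
    and "r \<in> {0<..<sst} \<Longrightarrow> (\<lambda>r. d_s V r \<phi>) differentiable (at r)"
    unfolding d_s_def by blast+
  have p_curve: "((\<lambda>p. param a c s p) has_vector_derivative (- a s * sin p, a s * cos p, 0)) (at p)"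
    "((\<lambda>p. (- a s * sin p, a s * cos p, 0::real)) has_vector_derivative
      (- a s * cos p, - a s * sin p, 0)) (at p)" for s p
    unfolding param_def by (intro has_vector_derivative_triple; auto intro!: derivative_eq_intros)+
  have "(\<lambda>p. V s p) differentiable (at p)"
    "(\<lambda>p. vector_derivative (\<lambda>p. V s p) (at p)) differentiable (at p)"
    if s: "s \<in> {0..sst}" for s p
  proof -
    have "param a c s q \<in> U" "V s q = F (param a c s q)" for q
      using U VF s by auto
    note comp = this F' F'' p_curve
    note curve = twice_differentiable_comp_curve[OF open_UNIV UNIV_I, where U=U and F=F
        and F'=F' and F''=F'' and \<gamma>="\<lambda>p. param a c s p"
        and \<gamma>'="\<lambda>p. (- a s * sin p, a s * cos p, 0)" and \<gamma>''="(- a s * cos p, - a s * sin p, 0)"]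
    show "(\<lambda>p. V s p) differentiable (at p)"
      by (rule curve(1)) (assumption | rule comp)+
    show "(\<lambda>p. vector_derivative (\<lambda>p. V s p) (at p)) differentiable (at p)"
      by (rule curve(2)) (assumption | rule comp)+
  qed
  then show "s \<in> {0..sst} \<Longrightarrow> (\<lambda>p. V s p) differentiable (at p)"
    and "s \<in> {0..sst} \<Longrightarrow> (\<lambda>p. d_phi V s p) differentiable (at p)"
    unfolding d_phi_def by blast+
qed

lemma LB_scale:
  fixes k :: real
  assumes "open S" "s \<in> S"
    and V_s: "\<And>r. r \<in> S \<Longrightarrow> (\<lambda>r. V r \<phi>) differentiable (at r)"
    and V_ss: "(\<lambda>r. d_s V r \<phi>) differentiable (at s)"
    and V_p: "\<And>p. (\<lambda>p. V s p) differentiable (at p)"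
    and V_pp: "(\<lambda>p. d_phi V s p) differentiable (at \<phi>)"
  shows "LB a a1 (\<lambda>s \<phi>. complex_of_real k * V s \<phi>) s \<phi> = complex_of_real k * LB a a1 V s \<phi>"
proof -
  have ds: "d_s (\<lambda>s \<phi>. complex_of_real k * V s \<phi>) r \<phi> = complex_of_real k * d_s V r \<phi>"
    if "r \<in> S" for r
    using V_s[OF that] by (simp add: d_s_def)
  have "d_s (d_s (\<lambda>s \<phi>. complex_of_real k * V s \<phi>)) s \<phi>
      = vector_derivative (\<lambda>r. complex_of_real k * d_s V r \<phi>) (at s)"
    unfolding d_s_def[of "d_s _"] using assms(1,2) ds
    by (intro vector_derivative_cong_eq) (auto simp: eventually_nhds intro!: exI[of _ S])
  also have "\<dots> = complex_of_real k * d_s (d_s V) s \<phi>"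
    using V_ss by (simp add: d_s_def[of "d_s V"])
  finally have dss: "d_s (d_s (\<lambda>s \<phi>. complex_of_real k * V s \<phi>)) s \<phi>
      = complex_of_real k * d_s (d_s V) s \<phi>" .
  have "d_phi (\<lambda>s \<phi>. complex_of_real k * V s \<phi>) s = (\<lambda>p. complex_of_real k * d_phi V s p)"
    using V_p by (simp add: d_phi_def fun_eq_iff)
  then have dpp: "d_phi (d_phi (\<lambda>s \<phi>. complex_of_real k * V s \<phi>)) s \<phi>
      = complex_of_real k * d_phi (d_phi V) s \<phi>"
    using V_pp by (simp add: d_phi_def[of "d_phi _"] d_phi_def[of "d_phi V"])
  show ?thesis
    unfolding LB_def ds[OF assms(2)] dss dpp by (simp add: algebra_simps)
qed

lemma Lin_scale:
  fixes k :: real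
  assumes "rev_profile ups sst a a1 a2 c c1 c2" "in_dom sst a a1 c c1 al1 al2 V"
    and "s \<in> {0<..<sst}"
  shows "Lin a a1 lam m u (\<lambda>s \<phi>. complex_of_real k * V s \<phi>) s \<phi>
    = complex_of_real k * Lin a a1 lam m u V s \<phi>"
proof -
  note D = in_dom_differentiable[OF assms(1,2)]
  have "LB a a1 (\<lambda>s \<phi>. complex_of_real k * V s \<phi>) s \<phi> = complex_of_real k * LB a a1 V s \<phi>"
    using assms(3) by (intro LB_scale[of "{0<..<sst}"] D) auto
  then show ?thesis by (simp add: Lin_def algebra_simps)
qed

lemma in_dom_scale:
  fixes k :: real
  assumes "in_dom sst a a1 c c1 al1 al2 V"
  shows "in_dom sst a a1 c c1 al1 al2 (\<lambda>s \<phi>. complex_of_real k * V s \<phi>)"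
proof -
  obtain U F F' F'' where U: "open U" "\<forall>s\<in>{0..sst}. \<forall>\<phi>. param a c s \<phi> \<in> U"
    and F': "\<forall>x\<in>U. (F has_derivative blinfun_apply (F' x)) (at x)"
    and F'': "\<forall>x\<in>U. (F' has_derivative blinfun_apply (F'' x)) (at x)"
    and cont: "continuous_on U F''"
    and VF: "\<forall>s\<in>{0..sst}. \<forall>\<phi>. V s \<phi> = F (param a c s \<phi>)"
    and robin: "a sst \<noteq> 0 \<longrightarrow> (\<forall>\<phi>. complex_of_real al1 * V sst \<phi> +
            complex_of_real al2 * F' (param a c sst \<phi>)
               (a1 sst * cos \<phi>, a1 sst * sin \<phi>, c1 sst) = 0)"
    using assms unfolding in_dom_def by blast
  show ?thesis unfolding in_dom_def
  proof (intro exI conjI)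
    show "\<forall>x\<in>U. ((\<lambda>x. k *\<^sub>R F x) has_derivative blinfun_apply (k *\<^sub>R F' x)) (at x)"
      using F' by (auto simp: scaleR_blinfun.rep_eq intro: has_derivative_scaleR_right)
    show "\<forall>x\<in>U. ((\<lambda>x. k *\<^sub>R F' x) has_derivative blinfun_apply (k *\<^sub>R F'' x)) (at x)"
      using F'' by (auto simp: scaleR_blinfun.rep_eq intro: has_derivative_scaleR_right)
    show "continuous_on U (\<lambda>x. k *\<^sub>R F'' x)"
      using cont by (intro continuous_intros)
    show "\<forall>s\<in>{0..sst}. \<forall>\<phi>. complex_of_real k * V s \<phi> = k *\<^sub>R F (param a c s \<phi>)"
      using VF by (simp add: scaleR_conv_of_real)
    show "a sst \<noteq> 0 \<longrightarrow> (\<forall>\<phi>. complex_of_real al1 * (complex_of_real k * V sst \<phi>) +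
        complex_of_real al2 * (k *\<^sub>R F' (param a c sst \<phi>))
          (a1 sst * cos \<phi>, a1 sst * sin \<phi>, c1 sst) = 0)"
    proof (intro impI allI)
      fix \<phi> assume "a sst \<noteq> 0"
      with robin have "complex_of_real k * (complex_of_real al1 * V sst \<phi> +
          complex_of_real al2 * F' (param a c sst \<phi>) (a1 sst * cos \<phi>, a1 sst * sin \<phi>, c1 sst)) = 0"
        by simp
      then show "complex_of_real al1 * (complex_of_real k * V sst \<phi>) +
          complex_of_real al2 * (k *\<^sub>R F' (param a c sst \<phi>))
            (a1 sst * cos \<phi>, a1 sst * sin \<phi>, c1 sst) = 0"
        by (simp add: scaleR_blinfun.rep_eq scaleR_conv_of_real algebra_simps)
    qed
  qed (use U in auto)
qed

lemma delay_characteristic_root: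
  fixes \<mu>0 b \<tau> :: real
  assumes "\<mu>0 > 0" "\<tau> \<ge> 0"
  obtains \<mu> where "\<mu> > 0" "\<mu> = \<mu>0 + b * (1 - exp (- \<mu> * \<tau>))"
proof -
  define g where "g \<mu> = \<mu> - \<mu>0 - b * (1 - exp (- \<mu> * \<tau>))" for \<mu>
  define Z where "Z = \<mu>0 + \<bar>b\<bar>"
  have "\<bar>1 - exp (- Z * \<tau>)\<bar> \<le> 1"
    using assms by (simp add: Z_def mult_nonpos_nonneg)
  then have "b * (1 - exp (- Z * \<tau>)) \<le> \<bar>b\<bar>"
    by (metis abs_ge_self abs_mult dual_order.trans mult_left_le abs_ge_zero)
  then have "0 \<le> g Z" by (simp add: g_def Z_def)
  moreover have "g 0 \<le> 0" "0 \<le> Z" using assms by (simp_all add: g_def Z_def)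
  moreover have "continuous_on {0..Z} g" unfolding g_def by (intro continuous_intros)
  ultimately obtain \<mu> where "0 \<le> \<mu>" "g \<mu> = 0" using IVT' by blast
  moreover have "\<mu> \<noteq> 0" using \<open>g \<mu> = 0\<close> assms by (auto simp: g_def)
  ultimately show ?thesis by (intro that[of \<mu>]) (auto simp: g_def)
qed

lemma eig_delay_of_eig_Lin:
  assumes surf: "rev_profile ups sst a a1 a2 c c1 c2"
    and eig: "eig_Lin sst a a1 c c1 al1 al2 lam m u \<mu>0"
    and root: "\<mu> = \<mu>0 + b * (1 - exp (- \<mu> * \<tau>))"
  shows "eig_delay sst a a1 c c1 al1 al2 lam m u b \<tau> (complex_of_real \<mu>)"
proof -
  obtain V where dom: "in_dom sst a a1 c c1 al1 al2 V" and "nonzero_fn sst V"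
    and V_eig: "\<forall>s\<in>{0<..<sst}. \<forall>\<phi>. Lin a a1 lam m u V s \<phi> = complex_of_real \<mu>0 * V s \<phi>"
    using eig unfolding eig_Lin_def by blast
  have growth: "\<mu> * exp (\<mu> * t) = exp (\<mu> * t) * \<mu>0 + b * (exp (\<mu> * t) - exp (\<mu> * (t - \<tau>)))"
    for t
  proof -
    have "exp (\<mu> * (t - \<tau>)) = exp (\<mu> * t) * exp (- \<mu> * \<tau>)"
      by (simp add: exp_add[symmetric] algebra_simps)
    then show ?thesis by (subst root) (simp add: algebra_simps)
  qed
  have exp_real: "exp (complex_of_real \<mu> * complex_of_real t) = complex_of_real (exp (\<mu> * t))" for t
    by (simp add: exp_of_real[symmetric])
  show ?thesis
    unfolding eig_delay_def Let_def exp_real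
  proof (intro exI[of _ V] conjI allI ballI)
    show "in_dom sst a a1 c c1 al1 al2 (\<lambda>s \<phi>. complex_of_real (exp (\<mu> * t)) * V s \<phi>)" for t
      using dom by (rule in_dom_scale)
    fix t s \<phi> assume s: "s \<in> {0<..<sst}"
    have "((\<lambda>r. complex_of_real (exp (\<mu> * r)) * V s \<phi>) has_vector_derivative
        complex_of_real (exp (\<mu> * t) * \<mu>0 + b * (exp (\<mu> * t) - exp (\<mu> * (t - \<tau>)))) * V s \<phi>) (at t)"
      unfolding growth[symmetric]
      by (intro has_vector_derivative_mult_left has_vector_derivative_of_real)
        (auto intro!: derivative_eq_intros)
    moreover have "Lin a a1 lam m u (\<lambda>s \<phi>. complex_of_real (exp (\<mu> * t)) * V s \<phi>) s \<phi>
        = complex_of_real (exp (\<mu> * t)) * (complex_of_real \<mu>0 * V s \<phi>)"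
      using Lin_scale[OF surf dom s] V_eig s by simp
    ultimately show "((\<lambda>r. complex_of_real (exp (\<mu> * r)) * V s \<phi>) has_vector_derivative
        Lin a a1 lam m u (\<lambda>s \<phi>. complex_of_real (exp (\<mu> * t)) * V s \<phi>) s \<phi> +
        complex_of_real b * (complex_of_real (exp (\<mu> * t)) * V s \<phi> -
          complex_of_real (exp (\<mu> * (t - \<tau>))) * V s \<phi>)) (at t)"
      by (simp add: algebra_simps)
  qed fact+
qed

theorem lemma8:
  fixes ups sst :: real and a a1 a2 c c1 c2 :: "real \<Rightarrow> real"
    and al1 al2 :: real and m :: nat and lam lam0 mu0 b \<tau> :: real and u0 :: "real \<Rightarrow> real"
  assumes surf: "rev_profile ups sst a a1 a2 c c1 c2"
    and robin: "a sst \<noteq> 0 \<Longrightarrow> (al1 \<noteq> 0 \<or> al2 \<noteq> 0) \<and> al1 * al2 \<ge> 0"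
    \<comment> \<open>lam0 = lambda_0^m, the smallest eigenvalue of -Delta_m on L^2_m\<close>
    and lam0_eig: "eig_minus_Delta_m sst a a1 c c1 al1 al2 m lam0"
    and lam0_least: "\<And>\<kappa>. eig_minus_Delta_m sst a a1 c c1 al1 al2 m \<kappa> \<Longrightarrow> lam0 \<le> \<kappa>"
    and lam: "lam > lam0"
    \<comment> \<open>psi_0 = u_0(s) e^{i m phi}: the vortex equilibrium with no zeros in (0, sst)\<close>
    and u0_dom: "in_dom sst a a1 c c1 al1 al2 (\<lambda>s \<phi>. complex_of_real (u0 s) * cis (real m * \<phi>))"
    and u0_eq: "\<And>s \<phi>. s \<in> {0<..<sst} \<Longrightarrow>
        LB a a1 (\<lambda>s \<phi>. complex_of_real (u0 s) * cis (real m * \<phi>)) s \<phi>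
        + complex_of_real (lam * (1 - (u0 s)\<^sup>2)) * (complex_of_real (u0 s) * cis (real m * \<phi>)) = 0"
    and u0_nozero: "\<And>s. s \<in> {0<..<sst} \<Longrightarrow> u0 s \<noteq> 0"
    and u0_sym: "a sst = 0 \<Longrightarrow> (\<And>s. s \<in> {0..sst} \<Longrightarrow> u0 s = u0 (sst - s))"
    \<comment> \<open>mu0 = mu_0^*, the largest eigenvalue of L_0, assumed positive\<close>
    and mu0_eig: "eig_Lin sst a a1 c c1 al1 al2 lam m u0 mu0"
    and mu0_greatest: "\<And>\<mu>. eig_Lin sst a a1 c c1 al1 al2 lam m u0 \<mu> \<Longrightarrow> \<mu> \<le> mu0"
    and mu0_pos: "mu0 > 0"
    and tau: "\<tau> \<ge> 0"
  shows "\<exists>\<mu>t::real. \<mu>t > 0 \<and>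
           eig_delay sst a a1 c c1 al1 al2 lam m u0 b \<tau> (complex_of_real \<mu>t)"
proof -
  obtain \<mu> where "\<mu> > 0" and root: "\<mu> = mu0 + b * (1 - exp (- \<mu> * \<tau>))"
    using delay_characteristic_root[OF mu0_pos tau] .
  then show ?thesis
    using eig_delay_of_eig_Lin[OF surf mu0_eig root] by blast
qed

end
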